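(* Let $H\in\mathbb{C}^{n\times n}$ be a Hermitian positive-definite matrix. Then $H$ is complex orthogonal, i.e. $H H^T = H^T H = \mathbb{I}_n$, if and only if there exists a complex orthogonal matrix $R\in\mathbb{C}^{n\times n}$ ($R R^T = R^T R = \mathbb{I}_n$) such that $H = R^\dagger R$.
   Context: $^T$ denotes transpose, $^\dagger$ conjugate transpose, $\mathbb{I}_n$ the $n\times n$ identity. *)

theory Defs
  imports "HOL-Analysis.Analysis"
begin

definition cmat_adjoint :: "complex^'n^'m \<Rightarrow> complex^'m^'n" where
  "cmat_adjoint A = (\<chi> i j. cnj (A $ j $ i))"

definition hermitian_cmat :: "complex^'n^'n \<Rightarrow> bool" where
  "hermitian_cmat H \<longleftrightarrow> cmat_adjoint H = H"

definition pos_def_cmat :: "complex^'n^'n \<Rightarrow> bool" where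
  "pos_def_cmat H \<longleftrightarrow> hermitian_cmat H \<and>
     (\<forall>x :: complex^'n. x \<noteq> 0 \<longrightarrow>
        (let q = (\<Sum>i\<in>UNIV. \<Sum>j\<in>UNIV. cnj (x $ i) * H $ i $ j * x $ j)
         in Im q = 0 \<and> Re q > 0))"

definition complex_orthogonal :: "complex^'n^'n \<Rightarrow> bool" where
  "complex_orthogonal R \<longleftrightarrow> R ** transpose R = mat 1 \<and> transpose R ** R = mat 1"

end

theory Submission imports Defs begin

text \<open>If \<open>H\<close> is Hermitian, positive definite and complex orthogonal, put \<open>K = H + 1\<close>. Then
  \<open>K K\<^sup>T = K + K\<^sup>T = K + conj K = 2 Re K\<close> is a real symmetric positive definite matrix,
  so Gram--Schmidt for the inner product it defines yields a real \<open>V\<close> with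
  \<open>V\<^sup>T K K\<^sup>T V = 1\<close>. Then \<open>R = V\<^sup>T K\<close> is complex orthogonal, and since
  \<open>R\<^sup>\<dagger> = K V\<close> and \<open>V V\<^sup>T = (K K\<^sup>T)\<^sup>-\<^sup>1\<close>, we get
  \<open>R\<^sup>\<dagger> R = K (K\<^sup>T)\<^sup>-\<^sup>1 = H\<close>, the last step because \<open>H K\<^sup>T = 1 + H = K\<close>.
  Conversely \<open>(R\<^sup>\<dagger> R)(R\<^sup>\<dagger> R)\<^sup>T = conj (R\<^sup>T R) = 1\<close> for complex orthogonal \<open>R\<close>.\<close>

lemma matrix_add_rdistrib: "(A + B) ** C = A ** C + B ** (C :: 'a::semiring_1^_^_)"
  by (simp add: matrix_matrix_mult_def vec_eq_iff distrib_right sum.distrib)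

lemma transpose_add: "transpose (A + B) = transpose A + transpose B"
  by (simp add: transpose_def vec_eq_iff)

lemma inner_matrix_symmetric:
  fixes G :: "real^'n^'n"
  assumes "transpose G = G"
  shows "x \<bullet> (G *v y) = y \<bullet> (G *v x)"
  by (metis assms dot_lmul_matrix inner_commute transpose_matrix_vector)

definition orthonormal_wrt :: "real^'n^'n \<Rightarrow> (real^'n) set \<Rightarrow> bool" where
  "orthonormal_wrt G B \<longleftrightarrow> (\<forall>b\<in>B. \<forall>c\<in>B. b \<bullet> (G *v c) = (if b = c then 1 else 0))"

context
  fixes G :: "real^'n^'n"
  assumes symmetric: "transpose G = G"
    and pos_def: "\<And>x. x \<noteq> 0 \<Longrightarrow> 0 < x \<bullet> (G *v x)"
begin

lemma orthonormal_wrt_extend: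
  assumes "finite B" and B: "orthonormal_wrt G B" and "card B < CARD('n)"
  obtains v where "v \<notin> B" and "orthonormal_wrt G (insert v B)"
proof -
  have "span B \<noteq> UNIV"
  proof
    assume "span B = UNIV"
    then have "CARD('n) \<le> card B"
      using dim_le_card[of UNIV B] \<open>finite B\<close> by simp
    with \<open>card B < CARD('n)\<close> show False by simp
  qed
  then obtain e where e: "e \<notin> span B" by auto
  define w where "w = e - (\<Sum>c\<in>B. (c \<bullet> (G *v e)) *\<^sub>R c)"
  have "w \<noteq> 0"
  proof
    assume "w = 0"
    then have "e = (\<Sum>c\<in>B. (c \<bullet> (G *v e)) *\<^sub>R c)" by (simp add: w_def)
    also have "\<dots> \<in> span B" by (intro span_sum span_scale span_base)
    finally show False using e by simp
  qed
  have w_orth: "d \<bullet> (G *v w) = 0" if "d \<in> B" for d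
  proof -
    have "(\<Sum>c\<in>B. (c \<bullet> (G *v e)) * (d \<bullet> (G *v c))) = (\<Sum>c\<in>B. if d = c then c \<bullet> (G *v e) else 0)"
      using B that by (intro sum.cong) (auto simp: orthonormal_wrt_def)
    also have "\<dots> = d \<bullet> (G *v e)" using \<open>finite B\<close> that by simp
    finally show ?thesis
      by (simp add: w_def matrix_vector_mult_diff_distrib vec.sum matrix_vector_mult_scaleR
          inner_diff_right inner_sum_right)
  qed
  define v where "v = (1 / sqrt (w \<bullet> (G *v w))) *\<^sub>R w"
  have v_unit: "v \<bullet> (G *v v) = 1"
    using pos_def[OF \<open>w \<noteq> 0\<close>]
    by (simp add: v_def matrix_vector_mult_scaleR power2_eq_square[symmetric])
  have v_orth: "c \<bullet> (G *v v) = 0" "v \<bullet> (G *v c) = 0" if "c \<in> B" for c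
    using w_orth[OF that] inner_matrix_symmetric[OF symmetric, of v c]
    by (simp_all add: v_def matrix_vector_mult_scaleR)
  have "v \<notin> B" using v_orth v_unit by fastforce
  moreover have "orthonormal_wrt G (insert v B)"
    using B v_unit v_orth by (auto simp: orthonormal_wrt_def)
  ultimately show ?thesis by (rule that)
qed

lemma orthonormal_wrt_exists:
  assumes "k \<le> CARD('n)"
  shows "\<exists>B. finite B \<and> card B = k \<and> orthonormal_wrt G B"
  using assms
proof (induction k)
  case 0
  show ?case by (intro exI[of _ "{}"]) (simp add: orthonormal_wrt_def)
next
  case (Suc k)
  then obtain B where "finite B" "card B = k" "orthonormal_wrt G B" by auto
  moreover obtain v where "v \<notin> B" "orthonormal_wrt G (insert v B)"
    using orthonormal_wrt_extend Suc.prems calculation by (metis Suc_le_lessD)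
  ultimately show ?case by (intro exI[of _ "insert v B"]) simp
qed

lemma pos_def_congruent_mat_1:
  obtains V :: "real^'n^'n" where "transpose V ** G ** V = mat 1"
proof -
  obtain B where B: "finite B" "card B = CARD('n)" "orthonormal_wrt G B"
    using orthonormal_wrt_exists by blast
  then obtain f where f: "bij_betw f (UNIV :: 'n set) B"
    using finite_same_card_bij[of "UNIV :: 'n set" B] by auto
  define V where "V = (\<chi> i j. f j $ i)"
  have "(transpose V ** G ** V) $ i $ j = f i \<bullet> (G *v f j)" for i j
    by (simp add: V_def matrix_matrix_mult_def transpose_def inner_vec_def
        matrix_vector_mult_def sum_distrib_left sum_distrib_right mult_ac)
      (rule sum.swap)
  also have "f i \<bullet> (G *v f j) = mat 1 $ i $ j" for i j
    using B(3) f by (auto simp: orthonormal_wrt_def mat_def bij_betw_def inj_on_def)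
  finally have "transpose V ** G ** V = mat 1" by (simp add: vec_eq_iff)
  then show ?thesis by (rule that)
qed

end

definition cnj_mat :: "complex^'n^'m \<Rightarrow> complex^'n^'m" where
  "cnj_mat A = (\<chi> i j. cnj (A $ i $ j))"

definition re_mat :: "complex^'n^'m \<Rightarrow> real^'n^'m" where
  "re_mat A = (\<chi> i j. Re (A $ i $ j))"

definition of_real_mat :: "real^'n^'m \<Rightarrow> complex^'n^'m" where
  "of_real_mat A = (\<chi> i j. complex_of_real (A $ i $ j))"

lemma cmat_adjoint_eq_transpose_cnj_mat: "cmat_adjoint A = transpose (cnj_mat A)"
  by (simp add: cmat_adjoint_def cnj_mat_def transpose_def vec_eq_iff)

lemma hermitian_cmat_iff_transpose: "hermitian_cmat H \<longleftrightarrow> transpose H = cnj_mat H"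
  unfolding hermitian_cmat_def cmat_adjoint_eq_transpose_cnj_mat by (metis transpose_transpose)

lemma cnj_mat_mult: "cnj_mat (A ** B) = cnj_mat A ** cnj_mat B"
  by (simp add: cnj_mat_def matrix_matrix_mult_def vec_eq_iff)

lemma cnj_mat_add: "cnj_mat (A + B) = cnj_mat A + cnj_mat B"
  by (simp add: cnj_mat_def vec_eq_iff)

lemma cnj_mat_mat_1 [simp]: "cnj_mat (mat 1) = mat 1"
  by (simp add: cnj_mat_def mat_def vec_eq_iff)

lemma cnj_mat_transpose: "cnj_mat (transpose A) = transpose (cnj_mat A)"
  by (simp add: cnj_mat_def transpose_def vec_eq_iff)

lemma cnj_mat_of_real_mat [simp]: "cnj_mat (of_real_mat A) = of_real_mat A"
  by (simp add: of_real_mat_def cnj_mat_def vec_eq_iff)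

lemma of_real_mat_mult: "of_real_mat (A ** B) = of_real_mat A ** of_real_mat B"
  by (simp add: of_real_mat_def matrix_matrix_mult_def vec_eq_iff)

lemma of_real_mat_transpose: "of_real_mat (transpose A) = transpose (of_real_mat A)"
  by (simp add: of_real_mat_def transpose_def vec_eq_iff)

lemma of_real_mat_mat_1 [simp]: "of_real_mat (mat 1) = mat 1"
  by (simp add: of_real_mat_def mat_def vec_eq_iff)

lemma add_cnj_mat: "A + cnj_mat A = of_real_mat (2 *\<^sub>R re_mat A)"
  by (simp add: cnj_mat_def re_mat_def of_real_mat_def vec_eq_iff complex_add_cnj)

lemma re_mat_add: "re_mat (A + B) = re_mat A + re_mat B"
  by (simp add: re_mat_def vec_eq_iff)

lemma re_mat_mat_1 [simp]: "re_mat (mat 1) = mat 1"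
  by (simp add: re_mat_def mat_def vec_eq_iff)

lemma re_mat_cnj_mat [simp]: "re_mat (cnj_mat A) = re_mat A"
  by (simp add: re_mat_def cnj_mat_def vec_eq_iff)

lemma transpose_re_mat: "transpose (re_mat A) = re_mat (transpose A)"
  by (simp add: re_mat_def transpose_def vec_eq_iff)

lemma pos_def_cmat_re_mat:
  fixes H :: "complex^'n^'n"
  assumes "pos_def_cmat H" and "x \<noteq> 0"
  shows "0 < x \<bullet> (re_mat H *v x)"
proof -
  define z :: "complex^'n" where "z = (\<chi> i. complex_of_real (x $ i))"
  have "z \<noteq> 0" using \<open>x \<noteq> 0\<close> by (auto simp: z_def vec_eq_iff)
  then have "0 < Re (\<Sum>i\<in>UNIV. \<Sum>j\<in>UNIV. cnj (z $ i) * H $ i $ j * z $ j)"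
    using assms(1) unfolding pos_def_cmat_def Let_def by blast
  also have "\<dots> = x \<bullet> (re_mat H *v x)"
    by (simp add: z_def re_mat_def inner_vec_def matrix_vector_mult_def
        sum_distrib_left mult.assoc)
  finally show ?thesis .
qed

lemma complex_orthogonal_iff_right_inverse:
  "complex_orthogonal R \<longleftrightarrow> R ** transpose R = mat 1"
  using matrix_left_right_inverse by (auto simp: complex_orthogonal_def)

lemma complex_orthogonal_adjoint_mult_self:
  assumes "complex_orthogonal R"
  shows "complex_orthogonal (cmat_adjoint R ** R)"
proof -
  have "(cmat_adjoint R ** R) ** transpose (cmat_adjoint R ** R)
      = transpose (cnj_mat R) ** (R ** transpose R) ** cnj_mat R"
    by (simp add: cmat_adjoint_eq_transpose_cnj_mat matrix_transpose_mul matrix_mul_assoc)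
  also have "\<dots> = cnj_mat (transpose R ** R)"
    using assms by (simp add: complex_orthogonal_iff_right_inverse cnj_mat_mult cnj_mat_transpose)
  also have "\<dots> = mat 1"
    using assms by (simp add: complex_orthogonal_def)
  finally show ?thesis by (simp add: complex_orthogonal_iff_right_inverse)
qed

lemma mult_transpose_plus_mat_1:
  fixes A :: "'a::comm_ring_1^'n^'n"
  assumes "A ** transpose A = mat 1"
  shows "(A + mat 1) ** transpose (A + mat 1) = (A + mat 1) + transpose (A + mat 1)"
  using assms by (simp add: matrix_add_ldistrib matrix_add_rdistrib transpose_add add_ac)

lemma complex_orthogonal_factor:
  fixes H K W :: "complex^'n^'n"
  assumes W: "transpose W ** (K ** transpose K) ** W = mat 1"
    and W_real: "cnj_mat W = W" and K_cnj: "cnj_mat K = transpose K"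
    and HK: "H ** transpose K = K"
  shows "complex_orthogonal (transpose W ** K)"
    and "H = cmat_adjoint (transpose W ** K) ** (transpose W ** K)"
proof -
  show "complex_orthogonal (transpose W ** K)"
    using W by (simp add: complex_orthogonal_iff_right_inverse matrix_transpose_mul matrix_mul_assoc)
  have "transpose W ** ((K ** transpose K) ** W) = mat 1"
    using W by (simp add: matrix_mul_assoc)
  then have "((K ** transpose K) ** W) ** transpose W = mat 1"
    using matrix_left_right_inverse by blast
  then have "K ** (transpose K ** W ** transpose W) = mat 1"
    by (simp add: matrix_mul_assoc)
  then have K_left_inverse: "(transpose K ** W ** transpose W) ** K = mat 1"
    using matrix_left_right_inverse by blast
  have "H = H ** ((transpose K ** W ** transpose W) ** K)"
    by (simp add: K_left_inverse)
  also have "\<dots> = (H ** transpose K) ** W ** transpose W ** K"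
    by (simp add: matrix_mul_assoc)
  also have "\<dots> = cmat_adjoint (transpose W ** K) ** (transpose W ** K)"
    by (simp add: HK cmat_adjoint_eq_transpose_cnj_mat cnj_mat_mult cnj_mat_transpose W_real K_cnj
        matrix_transpose_mul matrix_mul_assoc)
  finally show "H = cmat_adjoint (transpose W ** K) ** (transpose W ** K)" .
qed

lemma pos_def_complex_orthogonal_factor:
  fixes H :: "complex^'n^'n"
  assumes "pos_def_cmat H" and "complex_orthogonal H"
  obtains R where "complex_orthogonal R" and "H = cmat_adjoint R ** R"
proof -
  define K where "K = H + mat 1"
  define G where "G = 2 *\<^sub>R re_mat K"
  have H_orth: "H ** transpose H = mat 1"
    using \<open>complex_orthogonal H\<close> by (simp add: complex_orthogonal_def)
  have K_cnj: "cnj_mat K = transpose K"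
    using \<open>pos_def_cmat H\<close>
    by (simp add: K_def pos_def_cmat_def hermitian_cmat_iff_transpose cnj_mat_add transpose_add)
  have "K ** transpose K = K + transpose K"
    using mult_transpose_plus_mat_1[OF H_orth] by (simp add: K_def)
  also have "\<dots> = of_real_mat G"
    using add_cnj_mat[of K] by (simp add: G_def K_cnj)
  finally have KK: "K ** transpose K = of_real_mat G" .
  have G_symmetric: "transpose G = G"
    using re_mat_cnj_mat[of K] by (simp add: G_def transpose_scalar transpose_re_mat K_cnj)
  have G_pos_def: "0 < x \<bullet> (G *v x)" if "x \<noteq> 0" for x
  proof -
    have "x \<bullet> (G *v x) = 2 * (x \<bullet> (re_mat H *v x) + x \<bullet> x)"
      by (simp add: G_def K_def re_mat_add matrix_vector_mult_add_rdistrib inner_add_right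
          flip: scaleR_matrix_vector_assoc)
    moreover have "0 < x \<bullet> (re_mat H *v x) + x \<bullet> x"
      using pos_def_cmat_re_mat[OF \<open>pos_def_cmat H\<close> that] by (simp add: add_pos_nonneg)
    ultimately show ?thesis by simp
  qed
  obtain V :: "real^'n^'n" where V: "transpose V ** G ** V = mat 1"
    using pos_def_congruent_mat_1[OF G_symmetric G_pos_def] by blast
  have W: "transpose (of_real_mat V) ** (K ** transpose K) ** of_real_mat V = mat 1"
    using arg_cong[OF V, of of_real_mat] by (simp add: KK of_real_mat_mult of_real_mat_transpose)
  have HK: "H ** transpose K = K"
    by (simp add: K_def transpose_add matrix_add_ldistrib H_orth add.commute)
  show ?thesis
    using complex_orthogonal_factor[OF W cnj_mat_of_real_mat K_cnj HK] by (rule that)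
qed

theorem theorem1:
  fixes H :: "complex^'n^'n"
  assumes "hermitian_cmat H" and "pos_def_cmat H"
  shows "complex_orthogonal H \<longleftrightarrow>
         (\<exists>R :: complex^'n^'n. complex_orthogonal R \<and> H = cmat_adjoint R ** R)"
proof
  assume "complex_orthogonal H"
  \<comment> \<open>the hypothesis \<open>hermitian_cmat H\<close> is already part of \<open>pos_def_cmat H\<close>\<close>
  with \<open>pos_def_cmat H\<close> obtain R where "complex_orthogonal R" "H = cmat_adjoint R ** R"
    by (rule pos_def_complex_orthogonal_factor)
  then show "\<exists>R. complex_orthogonal R \<and> H = cmat_adjoint R ** R" by blast
next
  assume "\<exists>R. complex_orthogonal R \<and> H = cmat_adjoint R ** R"
  then show "complex_orthogonal H" using complex_orthogonal_adjoint_mult_self by blast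
qed

end
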